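(* Let $G$ be an alternating directed acyclic graph on $[n]$ with $G^{un}$ connected, and let $d\ge1$. A subgraph $H\subseteq G$ gives a face $\tilde Q_H$ of $\tilde Q_G$ of codimension $d$ if and only if $H^{un}$ has $d+1$ connected components and $E(H)=E(H_1)\cap\dots\cap E(H_d)$ for some subgraphs $H_1,\dots,H_d\subseteq G$ such that each $\tilde Q_{H_i}$ is a facet of $\tilde Q_G$.
   Context: Conventions: $G$ is a directed acyclic graph with vertex set $[n]$, every edge $(i,j)$ satisfying $i<j$; subgraphs $H\subseteq G$ have $V(H)=[n]$, $E(H)\subseteq E(G)$; $^{un}$ denotes underlying undirected graph. $\tilde Q_G=\mathrm{conv}(\{\mathbf 0\}\cup\{\mathbf e_i-\mathbf e_j:(i,j)\in E(G)\})\subset\mathbb R^n$. $G$ is alternating if there is no vertex $j$ with $(i,j),(j,k)\in E(G)$. A facet is a face of codimension 1. *)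

theory Defs
  imports "HOL-Analysis.Analysis"
begin

text \<open>Vertex set: a finite linearly ordered type 'n (order-isomorphic to [n], n = CARD('n)).
  A (directed) graph on it is given by its edge set. Ambient space R^n = real ^ 'n.\<close>

type_synonym 'n digraph = "('n \<times> 'n) set"

definition is_dag_ord :: "('n::linorder) digraph \<Rightarrow> bool" where
  "is_dag_ord G \<longleftrightarrow> (\<forall>(i,j)\<in>G. i < j)"

definition alternating :: "'n digraph \<Rightarrow> bool" where
  "alternating G \<longleftrightarrow> \<not> (\<exists>i j k. (i,j) \<in> G \<and> (j,k) \<in> G)"

definition und_conn :: "'n digraph \<Rightarrow> 'n rel" where
  "und_conn G = (G \<union> G\<inverse>)\<^sup>*"

definition und_components :: "'n digraph \<Rightarrow> 'n set set" where
  "und_components G = UNIV // und_conn G"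

definition und_connected :: "'n digraph \<Rightarrow> bool" where
  "und_connected G \<longleftrightarrow> card (und_components G) = 1"

definition subgraph :: "'n digraph \<Rightarrow> 'n digraph \<Rightarrow> bool" where
  "subgraph H G \<longleftrightarrow> H \<subseteq> G"

definition Qt :: "('n::finite) digraph \<Rightarrow> (real ^ 'n) set" where
  "Qt G = convex hull (insert 0 {axis i 1 - axis j 1 | i j. (i,j) \<in> G})"

definition face_codim :: "(real ^ 'n::finite) set \<Rightarrow> (real ^ 'n) set \<Rightarrow> nat \<Rightarrow> bool" where
  "face_codim F P d \<longleftrightarrow> F face_of P \<and> aff_dim P - aff_dim F = int d"

definition is_facet_of :: "(real ^ 'n::finite) set \<Rightarrow> (real ^ 'n) set \<Rightarrow> bool" where
  "is_facet_of F P \<longleftrightarrow> face_codim F P 1"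

end

theory Submission
  imports Defs
begin

text \<open>
  Every face of \<open>Qt G\<close> is exposed by a functional \<open>a\<close> through the origin, so \<open>a\<^sub>i \<le> a\<^sub>j\<close> on
  every edge, and the face is \<open>Qt H\<close> for the graph \<open>H\<close> of edges on which \<open>a\<close> is constant.
  The affine hull of \<open>Qt H\<close> is the span of its edge vectors, whose orthogonal complement consists
  of the vectors constant on the components of \<open>H\<close>; hence the codimension is the number of
  components minus one. Facets are therefore the faces given by cuts \<open>S\<close> of the vertex set with
  both sides connected and no edge entering \<open>S\<close> from outside.

  For a face with \<open>d + 1\<close> components, the components are blocks strictly ordered by \<open>a\<close> along
  every edge between them. One can always remove a block that is closed under predecessors or
  successors and leaves the rest connected; by induction this yields \<open>d\<close> cuts whose uncut edges
  intersect in exactly \<open>H\<close>. Conversely, an intersection of faces is the face exposed by the sum of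
  their functionals.

  Acyclicity of \<open>G\<close> is used only to exclude loops.
\<close>

section \<open>The polytope and its faces\<close>

definition generators :: "('n::finite) digraph \<Rightarrow> (real ^ 'n) set" where
  "generators G = insert 0 {axis i 1 - axis j 1 | i j. (i,j) \<in> G}"

lemma Qt_eq_hull_generators: "Qt G = convex hull generators G"
  by (simp add: Qt_def generators_def)

lemma finite_generators: "finite (generators (G :: ('n::finite) digraph))"
proof -
  have "{axis i 1 - axis j 1 | i j. (i,j) \<in> G} = (\<lambda>(i,j). axis i 1 - axis j 1 :: real ^ 'n) ` G"
    by auto
  then show ?thesis
    by (simp add: generators_def)
qed

lemma inner_axis_diff: "(a :: real ^ 'n::finite) \<bullet> (axis i 1 - axis j 1) = a $ i - a $ j"
  by (simp add: inner_diff_right inner_axis)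

lemma axis_component: "axis i x $ j = (if j = i then x else 0)"
  by (simp add: axis_def)

lemma edge_vector_in_Qt: "(i,j) \<in> G \<Longrightarrow> axis i 1 - axis j 1 \<in> Qt G"
  unfolding Qt_eq_hull_generators generators_def by (rule hull_inc) auto

lemma zero_in_Qt: "0 \<in> Qt G"
  unfolding Qt_eq_hull_generators generators_def by (rule hull_inc) simp

lemma convex_hull_Int_supporting_hyperplane:
  fixes V :: "'a::euclidean_space set"
  assumes "finite V" and "\<And>v. v \<in> V \<Longrightarrow> a \<bullet> v \<le> b"
  shows "convex hull V \<inter> {x. a \<bullet> x = b} = convex hull (V \<inter> {x. a \<bullet> x = b})"
proof
  have "convex hull V \<subseteq> {x. a \<bullet> x \<le> b}"
    using assms(2) by (intro hull_minimal) (auto simp: convex_halfspace_le)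
  then have "(convex hull V \<inter> {x. a \<bullet> x = b}) face_of convex hull V"
    by (intro face_of_Int_supporting_hyperplane_le) auto
  then obtain V' where "V' \<subseteq> V" and V': "convex hull V \<inter> {x. a \<bullet> x = b} = convex hull V'"
    using face_of_convex_hull_subset finite_imp_compact[OF assms(1)] by metis
  moreover have "V' \<subseteq> {x. a \<bullet> x = b}"
    using V' hull_subset[of V' convex] by auto
  ultimately show "convex hull V \<inter> {x. a \<bullet> x = b} \<subseteq> convex hull (V \<inter> {x. a \<bullet> x = b})"
    by (metis Int_subset_iff hull_mono)
  have "convex hull (V \<inter> {x. a \<bullet> x = b}) \<subseteq> {x. a \<bullet> x = b}"
    by (intro hull_minimal) (auto simp: convex_hyperplane)
  then show "convex hull (V \<inter> {x. a \<bullet> x = b}) \<subseteq> convex hull V \<inter> {x. a \<bullet> x = b}"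
    using hull_mono[of "V \<inter> {x. a \<bullet> x = b}" V] by auto
qed

text \<open>The functional \<open>x \<mapsto> x\<^sub>i - x\<^sub>j\<close> is at most 2 on the generators of a loopless graph,
  with equality exactly at \<open>e\<^sub>i - e\<^sub>j\<close>.\<close>

lemma edge_vector_in_Qt_imp_edge:
  fixes H :: "('n::finite) digraph"
  assumes "irrefl H" and "i \<noteq> j" and in_Qt: "axis i 1 - axis j 1 \<in> Qt H"
  shows "(i,j) \<in> H"
proof (rule ccontr)
  assume "(i,j) \<notin> H"
  define f :: "real ^ 'n" where "f = axis i 1 - axis j 1"
  have f_gen: "f \<bullet> v \<le> 2 \<and> f \<bullet> v \<noteq> 2" if "v \<in> generators H" for v
  proof -
    from that consider "v = 0" | k l where "v = axis k 1 - axis l 1" "(k,l) \<in> H"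
      unfolding generators_def by auto
    then show ?thesis
    proof cases
      case 2
      with \<open>irrefl H\<close> \<open>(i,j) \<notin> H\<close> have "k \<noteq> l" "(k,l) \<noteq> (i,j)"
        by (auto simp: irrefl_def)
      with 2 \<open>i \<noteq> j\<close> show ?thesis
        by (auto simp: f_def inner_axis_diff axis_component)
    qed simp
  qed
  have "f \<in> Qt H \<inter> {x. f \<bullet> x = 2}"
    using in_Qt \<open>i \<noteq> j\<close> by (simp add: f_def inner_axis_diff axis_component)
  also have "\<dots> = convex hull (generators H \<inter> {x. f \<bullet> x = 2})"
    unfolding Qt_eq_hull_generators
    using f_gen by (intro convex_hull_Int_supporting_hyperplane finite_generators) auto
  also have "\<dots> = {}"
    using f_gen by auto
  finally show False by simp
qed

lemma Qt_inject:
  assumes "irrefl H1" "irrefl H2" "Qt H1 = Qt H2"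
  shows "H1 = H2"
proof -
  have "H \<subseteq> H'" if "irrefl H'" "Qt H = Qt H'" "irrefl H" for H H' :: "'n::finite digraph"
  proof
    fix e assume "e \<in> H"
    then obtain i j where "e = (i,j)" "i \<noteq> j" "axis i 1 - axis j 1 \<in> Qt H'"
      using \<open>irrefl H\<close> edge_vector_in_Qt[of _ _ H] \<open>Qt H = Qt H'\<close>
      by (cases e) (auto simp: irrefl_def)
    then show "e \<in> H'"
      using edge_vector_in_Qt_imp_edge \<open>irrefl H'\<close> by blast
  qed
  then show ?thesis
    using assms by blast
qed

definition level_edges :: "('n::finite) digraph \<Rightarrow> real ^ 'n \<Rightarrow> 'n digraph" where
  "level_edges G a = {(i,j) \<in> G. a $ i = a $ j}"

definition edge_monotone :: "('n::finite) digraph \<Rightarrow> real ^ 'n \<Rightarrow> bool" where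
  "edge_monotone G a \<longleftrightarrow> (\<forall>(i,j) \<in> G. a $ i \<le> a $ j)"

lemma Qt_Int_hyperplane_eq_level_edges:
  assumes "edge_monotone G a"
  shows "Qt G \<inter> {x. a \<bullet> x = 0} = Qt (level_edges G a)"
proof -
  have "generators G \<inter> {x. a \<bullet> x = 0} = generators (level_edges G a)"
    unfolding generators_def level_edges_def by (auto simp: inner_axis_diff) blast
  moreover have "a \<bullet> v \<le> 0" if "v \<in> generators G" for v
    using that assms by (auto simp: generators_def edge_monotone_def inner_axis_diff)
  ultimately show ?thesis
    unfolding Qt_eq_hull_generators
    by (simp add: convex_hull_Int_supporting_hyperplane finite_generators)
qed

lemma Qt_level_edges_face_of:
  assumes "edge_monotone G a"
  shows "Qt (level_edges G a) face_of Qt G"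
proof -
  have "a \<bullet> v \<le> 0" if "v \<in> generators G" for v
    using that assms by (auto simp: generators_def edge_monotone_def inner_axis_diff)
  then have "Qt G \<subseteq> {x. a \<bullet> x \<le> 0}"
    unfolding Qt_eq_hull_generators by (intro hull_minimal) (auto simp: convex_halfspace_le)
  then have "(Qt G \<inter> {x. a \<bullet> x = 0}) face_of Qt G"
    by (intro face_of_Int_supporting_hyperplane_le) (auto simp: Qt_eq_hull_generators)
  then show ?thesis
    using Qt_Int_hyperplane_eq_level_edges[OF assms] by simp
qed

text \<open>Faces of a polytope are exposed; as \<open>0\<close> lies in every face \<open>Qt H\<close>, the exposing
  hyperplane passes through the origin.\<close>

lemma face_of_Qt_imp_level_edges:
  assumes "irrefl G" and "H \<subseteq> G" and "Qt H face_of Qt G"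
  obtains a where "edge_monotone G a" and "H = level_edges G a"
proof -
  have "polyhedron (Qt G)"
    unfolding Qt_eq_hull_generators
    by (intro polytope_imp_polyhedron polytope_convex_hull finite_generators)
  then have "Qt H exposed_face_of Qt G"
    using assms(3) exposed_face_of_polyhedron by blast
  then obtain a b where ab: "Qt G \<subseteq> {x. a \<bullet> x \<le> b}" "Qt H = Qt G \<inter> {x. a \<bullet> x = b}"
    unfolding exposed_face_of_def by blast
  then have "b = 0"
    using zero_in_Qt[of H] by auto
  have mono: "edge_monotone G a"
    using ab(1) \<open>b = 0\<close> edge_vector_in_Qt[of _ _ G]
    by (fastforce simp: edge_monotone_def inner_axis_diff)
  then have "Qt H = Qt (level_edges G a)"
    using ab(2) \<open>b = 0\<close> Qt_Int_hyperplane_eq_level_edges by simp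
  moreover have "irrefl H" "irrefl (level_edges G a)"
    using assms(1,2) by (auto simp: irrefl_def level_edges_def)
  ultimately show ?thesis
    using that mono Qt_inject by blast
qed

lemma face_of_Qt_iff:
  assumes "irrefl G" and "H \<subseteq> G"
  shows "Qt H face_of Qt G \<longleftrightarrow> (\<exists>a. edge_monotone G a \<and> H = level_edges G a)"
  using face_of_Qt_imp_level_edges[OF assms] Qt_level_edges_face_of by metis

section \<open>Dimension\<close>

lemma equiv_und_conn: "equiv UNIV (und_conn H)"
  unfolding und_conn_def equiv_def
  by (auto simp: refl_on_def sym_rtrancl sym_Un_converse intro: trans_rtrancl)

lemma und_components_mem_iff:
  assumes "C \<in> und_components H"
  shows "k \<in> C \<longleftrightarrow> C = und_conn H `` {k}"
proof -
  obtain x where C: "C = und_conn H `` {x}"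
    using assms unfolding und_components_def by (auto elim: quotientE)
  then show ?thesis
    using equiv_class_eq_iff[OF equiv_und_conn, of x k H] by auto
qed

lemma und_conn_class_in_und_components: "und_conn H `` {k} \<in> und_components H"
  unfolding und_components_def by (rule quotientI) simp

lemma edge_constant_und_conn:
  assumes "\<forall>(i,j) \<in> H. f i = f j" and "(k,l) \<in> und_conn H"
  shows "f k = f l"
  using assms(2) unfolding und_conn_def
  by (induction rule: rtrancl_induct) (use assms(1) in auto)

definition indicator_vec :: "'n set \<Rightarrow> real ^ ('n::finite)" where
  "indicator_vec C = (\<chi> k. if k \<in> C then 1 else 0)"

lemma orthogonal_generators_iff:
  "(\<forall>x \<in> generators H. orthogonal x y) \<longleftrightarrow> (\<forall>(i,j) \<in> H. y $ i = y $ j)"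
proof -
  have "orthogonal (axis i 1 - axis j 1) y \<longleftrightarrow> y $ i = y $ j" for i j
    by (simp add: orthogonal_def inner_commute inner_axis_diff)
  then show ?thesis
    by (auto simp: generators_def) (blast, simp add: orthogonal_def)
qed

lemma indicator_vec_edge_constant:
  assumes C: "C \<in> und_components H"
  shows "\<forall>(i,j) \<in> H. indicator_vec C $ i = indicator_vec C $ j"
proof clarify
  fix i j assume "(i,j) \<in> H"
  then have "(i,j) \<in> und_conn H"
    by (auto simp: und_conn_def)
  then have "und_conn H `` {i} = und_conn H `` {j}"
    by (simp add: eq_equiv_class_iff[OF equiv_und_conn])
  then have "i \<in> C \<longleftrightarrow> j \<in> C"
    using und_components_mem_iff[OF C] by metis
  then show "indicator_vec C $ i = indicator_vec C $ j"
    by (simp add: indicator_vec_def)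
qed

text \<open>An edge-constant vector is constant on components, so it is the combination of their
  indicator vectors with the values taken there as coefficients.\<close>

lemma edge_constant_in_span_indicators:
  assumes "\<forall>(i,j) \<in> H. y $ i = y $ j"
  shows "y \<in> span (indicator_vec ` und_components H)"
proof -
  have y_const: "y $ k = y $ l" if "(k,l) \<in> und_conn H" for k l
    using edge_constant_und_conn assms that by fast
  define c where "c C = y $ (SOME k. k \<in> C)" for C
  have "y = (\<Sum>C \<in> und_components H. c C *\<^sub>R indicator_vec C)"
  proof (rule iffD2[OF vec_eq_iff], rule allI)
    fix k
    let ?K = "und_conn H `` {k}"
    have "(\<Sum>C \<in> und_components H. c C *\<^sub>R indicator_vec C) $ k
        = (\<Sum>C \<in> und_components H. if C = ?K then c C else 0)"
      unfolding sum_component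
    proof (rule sum.cong)
      fix C assume "C \<in> und_components H"
      then show "(c C *\<^sub>R indicator_vec C) $ k = (if C = ?K then c C else 0)"
        using und_components_mem_iff[of C H k] by (simp add: indicator_vec_def)
    qed simp
    also have "\<dots> = c ?K"
      by (simp add: sum.delta und_conn_class_in_und_components)
    also have "\<dots> = y $ k"
    proof -
      have "(SOME l. l \<in> ?K) \<in> ?K"
        by (rule someI[of _ k]) (simp add: und_conn_def)
      then show ?thesis
        unfolding c_def by (simp add: y_const)
    qed
    finally show "y $ k = (\<Sum>C \<in> und_components H. c C *\<^sub>R indicator_vec C) $ k"
      by simp
  qed
  also have "\<dots> \<in> span (indicator_vec ` und_components H)"
    by (intro span_sum span_scale span_base imageI)
  finally show ?thesis .
qed

lemma orthogonal_generators_eq_span_indicators: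
  "{y. \<forall>x \<in> generators H. orthogonal x y} = span (indicator_vec ` und_components H)"
proof
  have "subspace {y. \<forall>x \<in> generators H. orthogonal x y}"
    by (auto simp: subspace_def orthogonal_def inner_add_right)
  moreover have "indicator_vec ` und_components H \<subseteq> {y. \<forall>x \<in> generators H. orthogonal x y}"
    using indicator_vec_edge_constant[of _ H] by (auto simp: orthogonal_generators_iff)
  ultimately show "span (indicator_vec ` und_components H) \<subseteq> {y. \<forall>x \<in> generators H. orthogonal x y}"
    by (rule span_minimal[rotated])
  show "{y. \<forall>x \<in> generators H. orthogonal x y} \<subseteq> span (indicator_vec ` und_components H)"
    using edge_constant_in_span_indicators by (auto simp: orthogonal_generators_iff)
qed

lemma dim_span_indicators:
  "dim (span (indicator_vec ` und_components (H :: ('n::finite) digraph))) = card (und_components H)"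
proof -
  let ?B = "indicator_vec ` und_components H"
  have disjoint: "C \<inter> D = {}" if "C \<in> und_components H" "D \<in> und_components H" "C \<noteq> D" for C D
    using that quotient_disj[OF equiv_und_conn] unfolding und_components_def by blast
  have "inj_on indicator_vec (und_components H)"
    by (rule inj_onI) (auto simp: indicator_vec_def vec_eq_iff split: if_splits)
  moreover have "pairwise orthogonal ?B"
  proof (clarsimp simp: pairwise_def)
    fix C D assume "C \<in> und_components H" "D \<in> und_components H"
      and "indicator_vec C \<noteq> indicator_vec D"
    then have "C \<inter> D = {}"
      using disjoint by blast
    then show "orthogonal (indicator_vec C) (indicator_vec D)"
      by (auto simp: orthogonal_def inner_vec_def indicator_vec_def intro!: sum.neutral)
  qed
  moreover have "0 \<notin> ?B"
  proof
    assume "0 \<in> ?B"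
    then obtain C where C: "C \<in> und_components H" "indicator_vec C = 0"
      by auto
    then obtain k where "k \<in> C"
      using in_quotient_imp_non_empty[OF equiv_und_conn] unfolding und_components_def by blast
    then have "indicator_vec C $ k = 1"
      by (simp add: indicator_vec_def)
    with C show False
      by simp
  qed
  ultimately show ?thesis
    by (simp add: dim_eq_card_independent pairwise_orthogonal_independent card_image)
qed

lemma aff_dim_Qt:
  "aff_dim (Qt (H :: ('n::finite) digraph)) = int CARD('n) - int (card (und_components H))"
proof -
  have "0 \<in> affine hull generators H"
    by (rule hull_inc) (simp add: generators_def)
  then have "aff_dim (Qt H) = int (dim (generators H))"
    using aff_dim_eq_dim[of 0 "generators H"] by (simp add: Qt_eq_hull_generators aff_dim_convex_hull)
  moreover have "{y. \<forall>x \<in> span (generators H). orthogonal x y} = {y. \<forall>x \<in> generators H. orthogonal x y}"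
    by (auto intro: span_base simp: orthogonal_commute dest: orthogonal_to_span)
  moreover have "dim {y \<in> UNIV. \<forall>x \<in> span (generators H). orthogonal x y} + dim (span (generators H))
      = dim (UNIV :: (real ^ 'n) set)"
    by (rule dim_subspace_orthogonal_to_vectors) auto
  ultimately show ?thesis
    using dim_span_indicators[of H] by (simp add: orthogonal_generators_eq_span_indicators)
qed

lemma face_codim_Qt_iff:
  assumes "und_connected G"
  shows "face_codim (Qt H) (Qt G) d \<longleftrightarrow> Qt H face_of Qt G \<and> card (und_components H) = d + 1"
  using assms aff_dim_Qt[of G] aff_dim_Qt[of H] unfolding face_codim_def und_connected_def
  by auto

section \<open>Connectivity inside a vertex set\<close>

definition und_edges_on :: "'n rel \<Rightarrow> 'n set \<Rightarrow> 'n rel" where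
  "und_edges_on E S = {(x,y). x \<in> S \<and> y \<in> S \<and> ((x,y) \<in> E \<or> (y,x) \<in> E)}"

definition connected_on :: "'n rel \<Rightarrow> 'n set \<Rightarrow> bool" where
  "connected_on E S \<longleftrightarrow> S \<noteq> {} \<and> (\<forall>x \<in> S. \<forall>y \<in> S. (x,y) \<in> (und_edges_on E S)\<^sup>*)"

definition component_on :: "'n rel \<Rightarrow> 'n set \<Rightarrow> 'n \<Rightarrow> 'n set" where
  "component_on E S x = (und_edges_on E S)\<^sup>* `` {x}"

definition adjacent :: "'n rel \<Rightarrow> 'n set \<Rightarrow> 'n set \<Rightarrow> bool" where
  "adjacent E A B \<longleftrightarrow> (\<exists>x \<in> A. \<exists>y \<in> B. (x,y) \<in> E \<or> (y,x) \<in> E)"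

lemma und_edges_on_converse [simp]: "und_edges_on (E\<inverse>) S = und_edges_on E S"
  unfolding und_edges_on_def by auto

lemma connected_on_converse [simp]: "connected_on (E\<inverse>) S = connected_on E S"
  unfolding connected_on_def by simp

lemma component_on_converse [simp]: "component_on (E\<inverse>) S x = component_on E S x"
  unfolding component_on_def by simp

lemma rtrancl_und_edges_on_mono: "S \<subseteq> S' \<Longrightarrow> (und_edges_on E S)\<^sup>* \<subseteq> (und_edges_on E S')\<^sup>*"
  by (rule rtrancl_mono) (auto simp: und_edges_on_def)

lemma rtrancl_und_edges_on_sym: "(x,y) \<in> (und_edges_on E S)\<^sup>* \<Longrightarrow> (y,x) \<in> (und_edges_on E S)\<^sup>*"
proof -
  have "sym (und_edges_on E S)"
    unfolding sym_def und_edges_on_def by auto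
  then have "sym ((und_edges_on E S)\<^sup>*)"
    by (rule sym_rtrancl)
  then show "(x,y) \<in> (und_edges_on E S)\<^sup>* \<Longrightarrow> (y,x) \<in> (und_edges_on E S)\<^sup>*"
    unfolding sym_def by blast
qed

lemma rtrancl_und_edges_on_stays: "(x,y) \<in> (und_edges_on E S)\<^sup>* \<Longrightarrow> x \<in> S \<Longrightarrow> y \<in> S"
  by (induction rule: rtrancl_induct) (auto simp: und_edges_on_def)

lemma rtrancl_und_edges_on_restrict:
  assumes "(x,y) \<in> (und_edges_on E S)\<^sup>*" and "x \<in> V"
    and closed: "\<And>u v. u \<in> V \<Longrightarrow> (u,v) \<in> und_edges_on E S \<Longrightarrow> v \<in> V"
  shows "(x,y) \<in> (und_edges_on E V)\<^sup>* \<and> y \<in> V"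
  using assms(1)
proof (induction rule: rtrancl_induct)
  case base
  then show ?case using assms(2) by simp
next
  case (step y z)
  then have "z \<in> V"
    using closed by blast
  moreover have "(y,z) \<in> und_edges_on E V"
    using step \<open>z \<in> V\<close> unfolding und_edges_on_def by auto
  ultimately show ?case
    using step.IH by (blast intro: rtrancl.rtrancl_into_rtrancl)
qed

lemma rtrancl_und_edges_on_exit:
  assumes "(u,v) \<in> (und_edges_on E U)\<^sup>*" and "u \<in> W" and "v \<notin> W"
  obtains p q where "(u,p) \<in> (und_edges_on E W)\<^sup>*" "p \<in> W" "(p,q) \<in> und_edges_on E U" "q \<notin> W"
proof -
  have "(\<exists>p q. (u,p) \<in> (und_edges_on E W)\<^sup>* \<and> p \<in> W \<and> (p,q) \<in> und_edges_on E U \<and> q \<notin> W)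
      \<or> (u,v) \<in> (und_edges_on E W)\<^sup>*"
    using assms(1)
  proof (induction rule: rtrancl_induct)
    case (step y z)
    show ?case
    proof (cases "(u,y) \<in> (und_edges_on E W)\<^sup>*")
      case True
      then have "y \<in> W"
        using rtrancl_und_edges_on_stays assms(2) by fast
      show ?thesis
      proof (cases "z \<in> W")
        case True
        then have "(y,z) \<in> und_edges_on E W"
          using step(2) \<open>y \<in> W\<close> unfolding und_edges_on_def by auto
        then show ?thesis
          using \<open>(u,y) \<in> (und_edges_on E W)\<^sup>*\<close> by (blast intro: rtrancl.rtrancl_into_rtrancl)
      next
        case False
        then show ?thesis
          using \<open>(u,y) \<in> (und_edges_on E W)\<^sup>*\<close> \<open>y \<in> W\<close> step(2) by blast
      qed
    next
      case False
      then show ?thesis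
        using step(3) by blast
    qed
  qed simp
  moreover have "(u,v) \<notin> (und_edges_on E W)\<^sup>*"
    using rtrancl_und_edges_on_stays[of u v E W] assms(2,3) by blast
  ultimately show ?thesis
    using that by blast
qed

lemma connected_on_nonempty: "connected_on E S \<Longrightarrow> S \<noteq> {}"
  unfolding connected_on_def by simp

lemma connected_onD: "connected_on E S \<Longrightarrow> x \<in> S \<Longrightarrow> y \<in> S \<Longrightarrow> (x,y) \<in> (und_edges_on E S)\<^sup>*"
  unfolding connected_on_def by blast

lemma connected_onI:
  assumes "x \<in> S" and "\<And>y. y \<in> S \<Longrightarrow> (x,y) \<in> (und_edges_on E S)\<^sup>*"
  shows "connected_on E S"
  unfolding connected_on_def
proof (intro conjI ballI)
  show "S \<noteq> {}"
    using assms(1) by blast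
  fix p q assume "p \<in> S" "q \<in> S"
  then show "(p,q) \<in> (und_edges_on E S)\<^sup>*"
    using assms(2) by (meson rtrancl_und_edges_on_sym rtrancl_trans)
qed

lemma connected_on_Un:
  assumes "connected_on E A" and "connected_on E B" and "adjacent E A B"
  shows "connected_on E (A \<union> B)"
proof -
  obtain x y where xy: "x \<in> A" "y \<in> B" "(x,y) \<in> E \<or> (y,x) \<in> E"
    using assms(3) unfolding adjacent_def by blast
  have A: "(x,q) \<in> (und_edges_on E (A \<union> B))\<^sup>*" if "q \<in> A" for q
    using connected_onD[OF assms(1) \<open>x \<in> A\<close> that] rtrancl_und_edges_on_mono[of A "A \<union> B" E]
    by blast
  have xy_edge: "(x,y) \<in> und_edges_on E (A \<union> B)"
    using xy unfolding und_edges_on_def by auto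
  have B: "(x,q) \<in> (und_edges_on E (A \<union> B))\<^sup>*" if "q \<in> B" for q
  proof -
    have "(y,q) \<in> (und_edges_on E (A \<union> B))\<^sup>*"
      using connected_onD[OF assms(2) \<open>y \<in> B\<close> that] rtrancl_und_edges_on_mono[of B "A \<union> B" E]
      by blast
    with xy_edge show ?thesis
      by (rule converse_rtrancl_into_rtrancl)
  qed
  show ?thesis
    using A B \<open>x \<in> A\<close> by (intro connected_onI[of x]) auto
qed

lemma component_on_self: "x \<in> component_on E S x"
  unfolding component_on_def by simp

lemma component_on_subset: "x \<in> S \<Longrightarrow> component_on E S x \<subseteq> S"
  unfolding component_on_def using rtrancl_und_edges_on_stays by fastforce

lemma component_on_step: "y \<in> component_on E S x \<Longrightarrow> (y,z) \<in> und_edges_on E S \<Longrightarrow> z \<in> component_on E S x"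
  unfolding component_on_def by (simp add: rtrancl.rtrancl_into_rtrancl)

lemma adjacent_Diff:
  assumes "connected_on E U" "C \<subseteq> U" "C \<noteq> {}" "U - C \<noteq> {}"
  shows "adjacent E C (U - C)"
proof -
  obtain c u where c: "c \<in> C" and u: "u \<in> U - C"
    using assms(3,4) by blast
  then have "(c,u) \<in> (und_edges_on E U)\<^sup>*"
    using assms(2) by (intro connected_onD[OF assms(1)]) auto
  then obtain p q where "p \<in> C" "(p,q) \<in> und_edges_on E U" "q \<notin> C"
    using c u by (auto elim: rtrancl_und_edges_on_exit)
  then show ?thesis
    unfolding adjacent_def und_edges_on_def by blast
qed

section \<open>Graded partitions and block cuts\<close>

definition pred_closed :: "'n rel \<Rightarrow> 'n set \<Rightarrow> 'n set \<Rightarrow> bool" where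
  "pred_closed E U C \<longleftrightarrow> (\<forall>i j. (i,j) \<in> E \<longrightarrow> i \<in> U \<longrightarrow> j \<in> C \<longrightarrow> i \<in> C)"

definition graded_partition :: "'n rel \<Rightarrow> ('n \<Rightarrow> real) \<Rightarrow> 'n set \<Rightarrow> 'n set set \<Rightarrow> bool" where
  "graded_partition E a U P \<longleftrightarrow> \<Union>P = U \<and> (\<forall>B \<in> P. connected_on E B)
     \<and> (\<forall>B \<in> P. \<forall>B' \<in> P. B \<noteq> B' \<longrightarrow> B \<inter> B' = {})
     \<and> (\<forall>B \<in> P. \<forall>x \<in> B. \<forall>y \<in> B. a x = a y)
     \<and> (\<forall>i j. (i,j) \<in> E \<longrightarrow> i \<in> U \<longrightarrow> j \<in> U \<longrightarrow> (\<exists>B \<in> P. i \<in> B \<and> j \<in> B) \<or> a i < a j)"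

definition block_cut :: "'n rel \<Rightarrow> 'n set \<Rightarrow> 'n set set \<Rightarrow> 'n set \<Rightarrow> bool" where
  "block_cut E U P S \<longleftrightarrow> S \<subseteq> U \<and> connected_on E S \<and> connected_on E (U - S) \<and> pred_closed E U S
     \<and> (\<forall>B \<in> P. B \<subseteq> S \<or> B \<inter> S = {})"

lemma pred_closed_converse: "pred_closed (E\<inverse>) U C \<longleftrightarrow> (\<forall>i j. (i,j) \<in> E \<longrightarrow> j \<in> U \<longrightarrow> i \<in> C \<longrightarrow> j \<in> C)"
  unfolding pred_closed_def by auto

lemma block_cut_block: "block_cut E U P S \<Longrightarrow> B \<in> P \<Longrightarrow> B \<subseteq> S \<or> B \<inter> S = {}"
  unfolding block_cut_def by blast

lemma block_cut_converse:
  assumes "block_cut E U P S" and "\<Union>P \<subseteq> U"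
  shows "block_cut (E\<inverse>) U P (U - S)"
proof -
  have "U - (U - S) = S"
    using assms(1) unfolding block_cut_def by blast
  then show ?thesis
    using assms unfolding block_cut_def pred_closed_def by auto
qed

lemma graded_partitionI:
  assumes "\<Union>P = U" "\<And>B. B \<in> P \<Longrightarrow> connected_on E B"
    "\<And>B B'. B \<in> P \<Longrightarrow> B' \<in> P \<Longrightarrow> B \<noteq> B' \<Longrightarrow> B \<inter> B' = {}"
    "\<And>B x y. B \<in> P \<Longrightarrow> x \<in> B \<Longrightarrow> y \<in> B \<Longrightarrow> a x = a y"
    "\<And>i j. (i,j) \<in> E \<Longrightarrow> i \<in> U \<Longrightarrow> j \<in> U \<Longrightarrow> (\<exists>B \<in> P. i \<in> B \<and> j \<in> B) \<or> a i < a j"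
  shows "graded_partition E a U P"
  unfolding graded_partition_def by (intro conjI ballI allI impI) (use assms in blast)+

lemma graded_partition_Union: "graded_partition E a U P \<Longrightarrow> \<Union>P = U"
  by (simp add: graded_partition_def)

lemma graded_partition_connected: "graded_partition E a U P \<Longrightarrow> B \<in> P \<Longrightarrow> connected_on E B"
  unfolding graded_partition_def by (elim conjE) blast

lemma graded_partition_disjoint:
  "graded_partition E a U P \<Longrightarrow> B \<in> P \<Longrightarrow> B' \<in> P \<Longrightarrow> B \<noteq> B' \<Longrightarrow> B \<inter> B' = {}"
  unfolding graded_partition_def by metis

lemma graded_partition_const:
  "graded_partition E a U P \<Longrightarrow> B \<in> P \<Longrightarrow> x \<in> B \<Longrightarrow> y \<in> B \<Longrightarrow> a x = a y"
  unfolding graded_partition_def by metis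

lemma graded_partition_edge:
  "graded_partition E a U P \<Longrightarrow> (i,j) \<in> E \<Longrightarrow> i \<in> U \<Longrightarrow> j \<in> U \<Longrightarrow> (\<exists>B \<in> P. i \<in> B \<and> j \<in> B) \<or> a i < a j"
  unfolding graded_partition_def by (elim conjE) blast

lemma graded_partition_block_subset: "graded_partition E a U P \<Longrightarrow> B \<in> P \<Longrightarrow> B \<subseteq> U"
  using graded_partition_Union by blast

lemma graded_partition_converse:
  assumes p: "graded_partition E a U P"
  shows "graded_partition (E\<inverse>) (\<lambda>x. - a x) U P"
proof (rule graded_partitionI)
  show "\<Union>P = U"
    using graded_partition_Union[OF p] .
  show "connected_on (E\<inverse>) B" if "B \<in> P" for B
    using graded_partition_connected[OF p that] by simp
  show "B \<inter> B' = {}" if "B \<in> P" "B' \<in> P" "B \<noteq> B'" for B B'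
    using graded_partition_disjoint[OF p that] .
  show "- a x = - a y" if "B \<in> P" "x \<in> B" "y \<in> B" for B x y
    using graded_partition_const[OF p that] by simp
  show "(\<exists>B \<in> P. i \<in> B \<and> j \<in> B) \<or> - a i < - a j" if "(i,j) \<in> E\<inverse>" "i \<in> U" "j \<in> U" for i j
    using graded_partition_edge[OF p, of j i] that by auto
qed

lemma graded_partition_Diff_block:
  assumes p: "graded_partition E a U P" and "C \<in> P"
  shows "graded_partition E a (U - C) (P - {C})"
proof (rule graded_partitionI)
  show "\<Union>(P - {C}) = U - C"
    using graded_partition_Union[OF p] graded_partition_disjoint[OF p _ \<open>C \<in> P\<close>] by blast
  show "connected_on E B" if "B \<in> P - {C}" for B
    using graded_partition_connected[OF p] that by blast
  show "B \<inter> B' = {}" if "B \<in> P - {C}" "B' \<in> P - {C}" "B \<noteq> B'" for B B'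
    using graded_partition_disjoint[OF p] that by blast
  show "a x = a y" if "B \<in> P - {C}" "x \<in> B" "y \<in> B" for B x y
    using graded_partition_const[OF p] that by blast
  show "(\<exists>B \<in> P - {C}. i \<in> B \<and> j \<in> B) \<or> a i < a j" if "(i,j) \<in> E" "i \<in> U - C" "j \<in> U - C" for i j
    using graded_partition_edge[OF p, of i j] that by blast
qed

lemma graded_partition_Diff_block_nonempty:
  assumes p: "graded_partition E a U P" and "2 \<le> card P" and "C \<in> P"
  shows "U - C \<noteq> {}"
proof -
  have "\<not> P \<subseteq> {C}"
  proof
    assume "P \<subseteq> {C}"
    then have "card P \<le> card {C}"
      by (intro card_mono) simp_all
    with \<open>2 \<le> card P\<close> show False
      by simp
  qed
  then obtain B where "B \<in> P" "B \<noteq> C"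
    by blast
  then show ?thesis
    using connected_on_nonempty[OF graded_partition_connected[OF p \<open>B \<in> P\<close>]]
      graded_partition_block_subset[OF p \<open>B \<in> P\<close>] graded_partition_disjoint[OF p \<open>B \<in> P\<close> \<open>C \<in> P\<close>]
    by blast
qed

lemma block_subset_component_on:
  assumes "connected_on E B" "B \<subseteq> W" "b \<in> B" "b \<in> component_on E W x"
  shows "B \<subseteq> component_on E W x"
proof
  fix b' assume "b' \<in> B"
  then have "(b,b') \<in> (und_edges_on E W)\<^sup>*"
    using connected_onD[OF assms(1,3)] rtrancl_und_edges_on_mono[OF assms(2)] by blast
  with assms(4) show "b' \<in> component_on E W x"
    unfolding component_on_def by (auto intro: rtrancl_trans)
qed

text \<open>A vertex of \<open>K\<close> minimising the grading lies in a block with no edge entering it from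
  the rest of \<open>U\<close>.\<close>

lemma exists_pred_closed_block_within:
  fixes E :: "('n::finite) rel"
  assumes p: "graded_partition E a U P" and "x \<in> K" "K \<subseteq> U" and K: "pred_closed E U K"
    and blocks: "\<And>B. B \<in> P \<Longrightarrow> B \<inter> K \<noteq> {} \<Longrightarrow> B \<subseteq> K"
  shows "\<exists>A \<in> P. A \<subseteq> K \<and> pred_closed E U A"
proof -
  have "finite (a ` K)"
    by (rule finite_imageI) simp
  then have "Min (a ` K) \<in> a ` K"
    using \<open>x \<in> K\<close> by (intro Min_in) auto
  then obtain m where "m \<in> K" and "a m = Min (a ` K)"
    by auto
  then have m_min: "a m \<le> a k" if "k \<in> K" for k
    using that \<open>finite (a ` K)\<close> by simp
  obtain A where A: "A \<in> P" "m \<in> A"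
    using graded_partition_Union[OF p] \<open>K \<subseteq> U\<close> \<open>m \<in> K\<close> by blast
  have "A \<inter> K \<noteq> {}"
    using A(2) \<open>m \<in> K\<close> by blast
  then have "A \<subseteq> K"
    using blocks[OF A(1)] by simp
  have "i \<in> A" if ij: "(i,j) \<in> E" "i \<in> U" "j \<in> A" for i j
  proof -
    have "i \<in> K"
      using K ij \<open>A \<subseteq> K\<close> unfolding pred_closed_def by blast
    have "j \<in> U"
      using graded_partition_block_subset[OF p A(1)] ij(3) by blast
    from graded_partition_edge[OF p ij(1,2) this]
    consider B where "B \<in> P" "i \<in> B" "j \<in> B" | "a i < a j"
      by blast
    then show ?thesis
    proof cases
      case 1
      then have "B = A"
        using graded_partition_disjoint[OF p \<open>B \<in> P\<close> A(1)] ij(3) by blast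
      then show ?thesis
        using \<open>i \<in> B\<close> by simp
    next
      case 2
      moreover have "a j = a m"
        using graded_partition_const[OF p A(1) ij(3) A(2)] .
      ultimately show ?thesis
        using m_min[OF \<open>i \<in> K\<close>] by simp
    qed
  qed
  then have "pred_closed E U A"
    unfolding pred_closed_def by blast
  then show ?thesis
    using A(1) \<open>A \<subseteq> K\<close> by blast
qed

lemma exists_pred_closed_block:
  fixes E :: "('n::finite) rel"
  assumes "graded_partition E a U P" and "U \<noteq> {}"
  shows "\<exists>C \<in> P. pred_closed E U C"
proof -
  obtain x where "x \<in> U"
    using assms(2) by blast
  moreover have "pred_closed E U U"
    unfolding pred_closed_def by blast
  ultimately show ?thesis
    using exists_pred_closed_block_within[OF assms(1), of x U] graded_partition_block_subset[OF assms(1)]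
    by blast
qed

lemma exists_pred_closed_block_in_component:
  fixes E :: "('n::finite) rel"
  assumes p: "graded_partition E a U P" and "C \<in> P" and "pred_closed (E\<inverse>) U C" and "x \<in> U - C"
  shows "\<exists>A \<in> P. A \<subseteq> component_on E (U - C) x \<and> pred_closed E U A"
proof (rule exists_pred_closed_block_within[OF p component_on_self])
  let ?K = "component_on E (U - C) x"
  show "?K \<subseteq> U"
    using component_on_subset[OF \<open>x \<in> U - C\<close>] by blast
  show "pred_closed E U ?K"
    unfolding pred_closed_def
  proof (intro allI impI)
    fix i j assume ij: "(i,j) \<in> E" "i \<in> U" "j \<in> ?K"
    then have "j \<in> U - C"
      using component_on_subset[OF \<open>x \<in> U - C\<close>] by blast
    then have "i \<notin> C"
      using \<open>pred_closed (E\<inverse>) U C\<close> ij(1) unfolding pred_closed_converse by blast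
    then have "(j,i) \<in> und_edges_on E (U - C)"
      using ij \<open>j \<in> U - C\<close> unfolding und_edges_on_def by blast
    then show "i \<in> ?K"
      using component_on_step ij(3) by fast
  qed
  fix B assume "B \<in> P" "B \<inter> ?K \<noteq> {}"
  then obtain b where "b \<in> B" "b \<in> ?K"
    by blast
  moreover have "B \<noteq> C"
    using \<open>b \<in> B\<close> \<open>b \<in> ?K\<close> component_on_subset[OF \<open>x \<in> U - C\<close>] by blast
  then have "B \<subseteq> U - C"
    using graded_partition_block_subset[OF p \<open>B \<in> P\<close>] graded_partition_disjoint[OF p \<open>B \<in> P\<close> \<open>C \<in> P\<close>]
    by blast
  ultimately show "B \<subseteq> ?K"
    using block_subset_component_on[OF graded_partition_connected[OF p \<open>B \<in> P\<close>]] by blast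
qed

text \<open>If \<open>A\<close> lies in one component \<open>K\<close> of \<open>U - C\<close>, every vertex of \<open>U\<close> outside \<open>K\<close> still reaches
  \<open>C\<close> inside \<open>U - A\<close>: its path to \<open>C\<close> may be cut where it first enters \<open>C\<close>, and before that it
  cannot meet \<open>K\<close>.\<close>

lemma rtrancl_und_edges_on_avoiding_component:
  assumes U: "connected_on E U" and C: "connected_on E C" "C \<subseteq> U" "c \<in> C"
    and x: "x \<in> U - C" and A: "A \<subseteq> component_on E (U - C) x"
    and w: "w \<in> U" "w \<notin> component_on E (U - C) x"
  shows "(w,c) \<in> (und_edges_on E (U - A))\<^sup>*"
proof -
  let ?K = "component_on E (U - C) x"
  have "?K \<subseteq> U - C"
    using component_on_subset[OF x] .
  then have CA: "C \<subseteq> U - A"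
    using A C(2) by blast
  have to_c: "(v,c) \<in> (und_edges_on E (U - A))\<^sup>*" if "v \<in> C" for v
    using connected_onD[OF C(1) that C(3)] rtrancl_und_edges_on_mono[OF CA] by blast
  show ?thesis
  proof (cases "w \<in> C")
    case False
    have "(w,c) \<in> (und_edges_on E U)\<^sup>*"
      using connected_onD[OF U w(1)] C(2,3) by blast
    then obtain p q where wp: "(w,p) \<in> (und_edges_on E (U - C))\<^sup>*" and "p \<in> U - C"
      and pq: "(p,q) \<in> und_edges_on E U" and "q \<notin> U - C"
      by (rule rtrancl_und_edges_on_exit[where W = "U - C"]) (use False w(1) C(3) in auto)
    then have "q \<in> C"
      unfolding und_edges_on_def by blast
    let ?V = "U - C - ?K"
    have closed: "v \<in> ?V" if "u \<in> ?V" "(u,v) \<in> und_edges_on E (U - C)" for u v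
    proof -
      have "(v,u) \<in> und_edges_on E (U - C)"
        using that(2) unfolding und_edges_on_def by blast
      then have "v \<notin> ?K"
        using that(1) component_on_step[of v E "U - C" x u] by blast
      then show ?thesis
        using that(2) unfolding und_edges_on_def by blast
    qed
    have "w \<in> ?V"
      using False w by blast
    then have "(w,p) \<in> (und_edges_on E ?V)\<^sup>* \<and> p \<in> ?V"
      by (rule rtrancl_und_edges_on_restrict[OF wp]) (rule closed)
    moreover have "?V \<subseteq> U - A"
      using A by blast
    ultimately have "(w,p) \<in> (und_edges_on E (U - A))\<^sup>*" and "(p,q) \<in> und_edges_on E (U - A)"
      using rtrancl_und_edges_on_mono[of ?V "U - A" E] pq \<open>q \<in> C\<close> CA
      unfolding und_edges_on_def by auto
    then show ?thesis
      using to_c[OF \<open>q \<in> C\<close>] by (meson rtrancl_into_rtrancl rtrancl_trans)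
  qed (rule to_c)
qed

lemma component_on_Diff_subset_component_on:
  assumes "connected_on E U" "connected_on E C" "C \<subseteq> U" "c \<in> C" "x \<in> U - C"
    and A: "A \<subseteq> component_on E (U - C) x"
    and y: "y \<in> U - A" "(y,c) \<notin> (und_edges_on E (U - A))\<^sup>*"
  shows "component_on E (U - A) y \<subseteq> component_on E (U - C) x - A"
proof
  fix v assume "v \<in> component_on E (U - A) y"
  then have "v \<in> U - A" and "(y,v) \<in> (und_edges_on E (U - A))\<^sup>*"
    using component_on_subset[OF y(1)] unfolding component_on_def by auto
  moreover have "v \<in> component_on E (U - C) x"
    using rtrancl_und_edges_on_avoiding_component[OF assms(1-5) A, of v] y(2) \<open>v \<in> U - A\<close>
      \<open>(y,v) \<in> _\<close> rtrancl_trans[of y v _ c] by blast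
  ultimately show "v \<in> component_on E (U - C) x - A"
    by blast
qed

lemma exists_closed_block_in_component:
  fixes E :: "('n::finite) rel"
  assumes p: "graded_partition E a U P" and "C \<in> P"
    and "pred_closed E U C \<or> pred_closed (E\<inverse>) U C" and "x \<in> U - C"
  shows "\<exists>A \<in> P. A \<subseteq> component_on E (U - C) x \<and> (pred_closed E U A \<or> pred_closed (E\<inverse>) U A)"
proof (cases "pred_closed (E\<inverse>) U C")
  case True
  then show ?thesis
    using exists_pred_closed_block_in_component[OF p \<open>C \<in> P\<close> True \<open>x \<in> U - C\<close>] by blast
next
  case False
  then have "pred_closed ((E\<inverse>)\<inverse>) U C"
    using assms(3) by simp
  then show ?thesis
    using exists_pred_closed_block_in_component[OF graded_partition_converse[OF p] \<open>C \<in> P\<close> _ \<open>x \<in> U - C\<close>]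
    by auto
qed

text \<open>Among all blocks \<open>C\<close> closed under predecessors or successors and all \<open>x \<in> U - C\<close>, pick one
  minimising the component of \<open>x\<close> in \<open>U - C\<close>. If \<open>U - C\<close> were disconnected, that component
  would contain a block \<open>A\<close> of the opposite kind, and removing \<open>A\<close> instead would leave a
  strictly smaller component.\<close>

lemma exists_removable_block:
  fixes E :: "('n::finite) rel"
  assumes p: "graded_partition E a U P" and U: "connected_on E U" and "2 \<le> card P"
  shows "\<exists>C \<in> P. connected_on E (U - C) \<and> (pred_closed E U C \<or> pred_closed (E\<inverse>) U C)"
proof (rule ccontr)
  assume none: "\<not> ?thesis"
  define Q where "Q = (\<lambda>(C,x). C \<in> P \<and> (pred_closed E U C \<or> pred_closed (E\<inverse>) U C) \<and> x \<in> U - C)"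
  define f where "f = (\<lambda>(C,x). card (component_on E (U - C) x))"
  obtain C0 where C0: "C0 \<in> P" "pred_closed E U C0"
    using exists_pred_closed_block[OF p connected_on_nonempty[OF U]] by blast
  then obtain x0 where "x0 \<in> U - C0"
    using graded_partition_Diff_block_nonempty[OF p \<open>2 \<le> card P\<close>] by blast
  with C0 have "Q (C0,x0)"
    unfolding Q_def by simp
  then obtain C x where Q: "Q (C,x)" and minimal: "\<And>D. Q D \<Longrightarrow> f (C,x) \<le> f D"
    using ex_has_least_nat[of Q "(C0,x0)" f] by auto
  then have C: "C \<in> P" "pred_closed E U C \<or> pred_closed (E\<inverse>) U C" and x: "x \<in> U - C"
    unfolding Q_def by auto
  define K where "K = component_on E (U - C) x"
  have "K \<subseteq> U - C"
    unfolding K_def using component_on_subset[OF x] .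
  obtain A where A: "A \<in> P" "A \<subseteq> K" and A_closed: "pred_closed E U A \<or> pred_closed (E\<inverse>) U A"
    using exists_closed_block_in_component[OF p C x] unfolding K_def by blast
  have not_connected: "\<not> connected_on E (U - A)"
    using none A(1) A_closed by blast
  obtain c where "c \<in> C"
    using connected_on_nonempty[OF graded_partition_connected[OF p C(1)]] by blast
  have "\<exists>y \<in> U - A. (y,c) \<notin> (und_edges_on E (U - A))\<^sup>*"
  proof (rule ccontr)
    assume "\<not> ?thesis"
    then have "connected_on E (U - A)"
      using \<open>c \<in> C\<close> \<open>A \<subseteq> K\<close> \<open>K \<subseteq> U - C\<close> graded_partition_block_subset[OF p C(1)]
      by (intro connected_onI[of c]) (auto intro: rtrancl_und_edges_on_sym)
    with not_connected show False
      by blast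
  qed
  then obtain y where y: "y \<in> U - A" "(y,c) \<notin> (und_edges_on E (U - A))\<^sup>*"
    by blast
  define K' where "K' = component_on E (U - A) y"
  have "K' \<subseteq> K - A"
    unfolding K_def K'_def
    using component_on_Diff_subset_component_on[OF U graded_partition_connected[OF p C(1)]
        graded_partition_block_subset[OF p C(1)] \<open>c \<in> C\<close> x _ y] A(2) K_def by blast
  moreover have "A \<noteq> {}"
    using connected_on_nonempty[OF graded_partition_connected[OF p A(1)]] .
  ultimately have "card K' < card K"
    using A(2) by (intro psubset_card_mono) auto
  moreover have "Q (A,y)"
    unfolding Q_def using A(1) A_closed y(1) by simp
  then have "card K \<le> card K'"
    using minimal unfolding f_def K_def K'_def by fastforce
  ultimately show False
    by simp
qed

lemma block_cut_of_block:
  assumes p: "graded_partition E a U P" and "C \<in> P" "pred_closed E U C" "connected_on E (U - C)"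
  shows "block_cut E U P C"
  unfolding block_cut_def
  using assms graded_partition_block_subset[OF p] graded_partition_connected[OF p]
    graded_partition_disjoint[OF p _ \<open>C \<in> P\<close>]
  by blast

text \<open>Extending a cut of \<open>U - C\<close> by the predecessor-closed block \<open>C\<close>: \<open>C\<close> joins the side it is
  adjacent to, which keeps both sides connected.\<close>

lemma extend_block_cut_pred_closed:
  assumes p: "graded_partition E a U P" and C: "C \<in> P" "pred_closed E U C"
    and U: "connected_on E U" and UC: "connected_on E (U - C)"
    and cut: "block_cut E (U - C) (P - {C}) S'"
  shows "\<exists>S. block_cut E U P S \<and> S \<inter> (U - C) = S'"
proof -
  have "C \<subseteq> U" and conn_C: "connected_on E C"
    using graded_partition_block_subset[OF p C(1)] graded_partition_connected[OF p C(1)] .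
  have "S' \<subseteq> U - C" and conn_S': "connected_on E S'" and conn_T': "connected_on E (U - C - S')"
    and closed_S': "pred_closed E (U - C) S'" and blocks: "\<forall>B \<in> P - {C}. B \<subseteq> S' \<or> B \<inter> S' = {}"
    using cut unfolding block_cut_def by auto
  have blocks_C: "B \<subseteq> S' \<or> B \<inter> S' = {}" "B \<inter> C = {}" if "B \<in> P" "B \<noteq> C" for B
    using blocks that graded_partition_disjoint[OF p that(1) C(1) that(2)] by auto
  show ?thesis
  proof (cases "adjacent E C S'")
    case True
    have "block_cut E U P (S' \<union> C)"
      unfolding block_cut_def
    proof (intro conjI)
      show "connected_on E (S' \<union> C)"
        using connected_on_Un[OF conn_C conn_S' True] by (simp add: Un_commute)
      have "U - (S' \<union> C) = U - C - S'"
        by blast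
      then show "connected_on E (U - (S' \<union> C))"
        using conn_T' by simp
      show "pred_closed E U (S' \<union> C)"
        using C(2) closed_S' unfolding pred_closed_def by blast
      show "\<forall>B \<in> P. B \<subseteq> S' \<union> C \<or> B \<inter> (S' \<union> C) = {}"
        using blocks_C by blast
    qed (use \<open>C \<subseteq> U\<close> \<open>S' \<subseteq> U - C\<close> in blast)
    moreover have "(S' \<union> C) \<inter> (U - C) = S'"
      using \<open>S' \<subseteq> U - C\<close> by blast
    ultimately show ?thesis
      by blast
  next
    case False
    have "adjacent E C (U - C)"
      using adjacent_Diff[OF U \<open>C \<subseteq> U\<close> connected_on_nonempty[OF conn_C] connected_on_nonempty[OF UC]] .
    then have "adjacent E C (U - C - S')"
      using False unfolding adjacent_def by blast
    have "block_cut E U P S'"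
      unfolding block_cut_def
    proof (intro conjI)
      have "U - S' = (U - C - S') \<union> C"
        using \<open>C \<subseteq> U\<close> \<open>S' \<subseteq> U - C\<close> by blast
      then show "connected_on E (U - S')"
        using connected_on_Un[OF conn_C conn_T' \<open>adjacent E C (U - C - S')\<close>] by (simp add: Un_commute)
      show "pred_closed E U S'"
        using False closed_S' unfolding pred_closed_def adjacent_def by blast
      show "\<forall>B \<in> P. B \<subseteq> S' \<or> B \<inter> S' = {}"
        using blocks_C \<open>S' \<subseteq> U - C\<close> by blast
    qed (use conn_S' \<open>S' \<subseteq> U - C\<close> in auto)
    moreover have "S' \<inter> (U - C) = S'"
      using \<open>S' \<subseteq> U - C\<close> by blast
    ultimately show ?thesis
      by blast
  qed
qed

lemma extend_block_cut:
  assumes p: "graded_partition E a U P" and C: "C \<in> P" "pred_closed E U C \<or> pred_closed (E\<inverse>) U C"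
    and U: "connected_on E U" and UC: "connected_on E (U - C)"
    and cut: "block_cut E (U - C) (P - {C}) S'"
  shows "\<exists>S. block_cut E U P S \<and> S \<inter> (U - C) = S'"
proof (cases "pred_closed E U C")
  case True
  then show ?thesis
    using extend_block_cut_pred_closed[OF p C(1) _ U UC cut] by blast
next
  case False
  have "\<Union>(P - {C}) \<subseteq> U - C"
    using graded_partition_Union[OF graded_partition_Diff_block[OF p C(1)]] by blast
  then have "block_cut (E\<inverse>) (U - C) (P - {C}) (U - C - S')"
    using block_cut_converse[OF cut] by blast
  then obtain S where S: "block_cut (E\<inverse>) U P S" "S \<inter> (U - C) = U - C - S'"
    using extend_block_cut_pred_closed[OF graded_partition_converse[OF p] C(1) _ _ _ ] False C(2) U UC
    by auto
  have "block_cut E U P (U - S)"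
    using block_cut_converse[OF S(1)] graded_partition_Union[OF p] by simp
  moreover have "(U - S) \<inter> (U - C) = S'"
    using S(2) cut unfolding block_cut_def by blast
  ultimately show ?thesis
    by blast
qed

lemma exists_block_cut_separating_block:
  assumes p: "graded_partition E a U P" and C: "C \<in> P" "pred_closed E U C \<or> pred_closed (E\<inverse>) U C"
    and "connected_on E (U - C)"
  shows "\<exists>N. block_cut E U P N \<and> (\<forall>i \<in> U. \<forall>j \<in> U. (i \<in> N \<longleftrightarrow> j \<in> N) \<longleftrightarrow> (i \<in> C \<longleftrightarrow> j \<in> C))"
proof (cases "pred_closed E U C")
  case True
  then show ?thesis
    using block_cut_of_block[OF p C(1) True \<open>connected_on E (U - C)\<close>] by blast
next
  case False
  have "U - (U - C) = C"
    using graded_partition_block_subset[OF p C(1)] by blast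
  then have "block_cut (E\<inverse>) U P C"
    using block_cut_of_block[OF graded_partition_converse[OF p] C(1)] False C(2) assms(4) by simp
  then have "block_cut E U P (U - C)"
    using block_cut_converse[of "E\<inverse>" U P C] graded_partition_Union[OF p] by simp
  then show ?thesis
    by blast
qed

definition cuts_separate_blocks :: "'n rel \<Rightarrow> 'n set \<Rightarrow> 'n set set \<Rightarrow> 'n set set \<Rightarrow> bool" where
  "cuts_separate_blocks E U P \<S> \<longleftrightarrow> (\<forall>i j. (i,j) \<in> E \<longrightarrow> i \<in> U \<longrightarrow> j \<in> U \<longrightarrow>
     (\<forall>S \<in> \<S>. i \<in> S \<longleftrightarrow> j \<in> S) \<longrightarrow> (\<exists>B \<in> P. i \<in> B \<and> j \<in> B))"

lemma cuts_separate_blocksD: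
  assumes "cuts_separate_blocks E U P \<S>" and "(i,j) \<in> E" "i \<in> U" "j \<in> U"
    and "\<And>S. S \<in> \<S> \<Longrightarrow> i \<in> S \<longleftrightarrow> j \<in> S"
  shows "\<exists>B \<in> P. i \<in> B \<and> j \<in> B"
  using assms unfolding cuts_separate_blocks_def by blast

lemma cuts_separate_blocks_extend:
  assumes "C \<in> P" and sep: "cuts_separate_blocks E (U - C) (P - {C}) \<S>'"
    and "N \<in> \<S>" and N: "\<And>i j. i \<in> U \<Longrightarrow> j \<in> U \<Longrightarrow> (i \<in> N \<longleftrightarrow> j \<in> N) \<longleftrightarrow> (i \<in> C \<longleftrightarrow> j \<in> C)"
    and traces: "\<And>S'. S' \<in> \<S>' \<Longrightarrow> \<exists>S \<in> \<S>. S \<inter> (U - C) = S'"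
  shows "cuts_separate_blocks E U P \<S>"
  unfolding cuts_separate_blocks_def
proof (intro allI impI)
  fix i j assume ij: "(i,j) \<in> E" "i \<in> U" "j \<in> U" and same: "\<forall>S \<in> \<S>. i \<in> S \<longleftrightarrow> j \<in> S"
  then have "i \<in> C \<longleftrightarrow> j \<in> C"
    using N[OF ij(2,3)] \<open>N \<in> \<S>\<close> by blast
  show "\<exists>B \<in> P. i \<in> B \<and> j \<in> B"
  proof (cases "i \<in> C")
    case True
    with \<open>i \<in> C \<longleftrightarrow> j \<in> C\<close> show ?thesis
      using \<open>C \<in> P\<close> by blast
  next
    case False
    with \<open>i \<in> C \<longleftrightarrow> j \<in> C\<close> have "i \<in> U - C" "j \<in> U - C"
      using ij by auto
    have "i \<in> S' \<longleftrightarrow> j \<in> S'" if "S' \<in> \<S>'" for S'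
      using traces[OF that] same \<open>i \<in> U - C\<close> \<open>j \<in> U - C\<close> by blast
    then have "\<exists>B \<in> P - {C}. i \<in> B \<and> j \<in> B"
      by (rule cuts_separate_blocksD[OF sep ij(1) \<open>i \<in> U - C\<close> \<open>j \<in> U - C\<close>])
    then show ?thesis
      by blast
  qed
qed

text \<open>Induction on the number of blocks: remove a block \<open>C\<close> supplied by
  \<open>exists_removable_block\<close>, extend the cuts for the remaining blocks, and add \<open>C\<close> or \<open>U - C\<close>
  as the cut separating \<open>C\<close> from the rest.\<close>

lemma exists_block_cuts:
  fixes E :: "('n::finite) rel"
  assumes "graded_partition E a U P" and "connected_on E U"
  shows "\<exists>Ss. length Ss + 1 = card P \<and> (\<forall>S \<in> set Ss. block_cut E U P S)
    \<and> cuts_separate_blocks E U P (set Ss)"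
  using assms
proof (induction "card P" arbitrary: U P rule: less_induct)
  case less
  note p = less.prems(1) and U = less.prems(2)
  have "P \<noteq> {}"
    using graded_partition_Union[OF p] connected_on_nonempty[OF U] by blast
  then have "card P \<noteq> 0"
    by simp
  show ?case
  proof (cases "card P = 1")
    case True
    then obtain B where "P = {B}"
      by (rule card_1_singletonE)
    then show ?thesis
      using True graded_partition_Union[OF p]
      by (intro exI[of _ "[]"]) (auto simp: cuts_separate_blocks_def)
  next
    case False
    with \<open>card P \<noteq> 0\<close> have "2 \<le> card P"
      by linarith
    then obtain C where C: "C \<in> P" "pred_closed E U C \<or> pred_closed (E\<inverse>) U C"
      and UC: "connected_on E (U - C)"
      using exists_removable_block[OF p U] by blast
    have "card (P - {C}) < card P"
      using C(1) \<open>2 \<le> card P\<close> by simp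
    then obtain Ss' where len: "length Ss' + 1 = card (P - {C})"
      and cuts: "\<forall>S' \<in> set Ss'. block_cut E (U - C) (P - {C}) S'"
      and sep: "cuts_separate_blocks E (U - C) (P - {C}) (set Ss')"
      using less.hyps[OF _ graded_partition_Diff_block[OF p C(1)] UC] by blast
    obtain g where g: "\<And>S'. S' \<in> set Ss' \<Longrightarrow> block_cut E U P (g S') \<and> g S' \<inter> (U - C) = S'"
      using extend_block_cut[OF p C U UC] cuts by metis
    obtain N where N: "block_cut E U P N"
      and N_C: "\<And>i j. i \<in> U \<Longrightarrow> j \<in> U \<Longrightarrow> (i \<in> N \<longleftrightarrow> j \<in> N) \<longleftrightarrow> (i \<in> C \<longleftrightarrow> j \<in> C)"
      using exists_block_cut_separating_block[OF p C UC] by blast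
    have "length (N # map g Ss') + 1 = card P"
      using len C(1) \<open>2 \<le> card P\<close> by simp
    moreover have "\<forall>S \<in> set (N # map g Ss'). block_cut E U P S"
      using N g by auto
    moreover have "cuts_separate_blocks E U P (set (N # map g Ss'))"
      by (rule cuts_separate_blocks_extend[OF C(1) sep _ N_C]) (use g in auto)
    ultimately show ?thesis
      by blast
  qed
qed

section \<open>Facets\<close>

definition uncut_edges :: "'n digraph \<Rightarrow> 'n set \<Rightarrow> 'n digraph" where
  "uncut_edges G S = {(k,l) \<in> G. k \<in> S \<longleftrightarrow> l \<in> S}"

lemma uncut_edges_subset: "uncut_edges G S \<subseteq> G"
  unfolding uncut_edges_def by blast

lemma rtrancl_und_edges_on_subset_und_conn:
  assumes "(x,y) \<in> (und_edges_on E S)\<^sup>*"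
  shows "(x,y) \<in> und_conn (E \<inter> S \<times> S)"
proof -
  have "und_edges_on E S \<subseteq> (E \<inter> S \<times> S) \<union> (E \<inter> S \<times> S)\<inverse>"
    unfolding und_edges_on_def by auto
  then show ?thesis
    using rtrancl_mono assms unfolding und_conn_def by blast
qed

lemma und_conn_uncut_edges:
  assumes "connected_on G S" and "connected_on G (UNIV - S)"
  shows "und_conn (uncut_edges G S) = {(x,y). x \<in> S \<longleftrightarrow> y \<in> S}"
proof (intro equalityI subsetI; clarify)
  fix x y assume "(x,y) \<in> und_conn (uncut_edges G S)"
  then show "x \<in> S \<longleftrightarrow> y \<in> S"
    by (rule edge_constant_und_conn[rotated]) (auto simp: uncut_edges_def)
next
  have mono: "und_conn (G \<inter> T \<times> T) \<subseteq> und_conn (uncut_edges G S)" if "T = S \<or> T = UNIV - S" for T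
    unfolding und_conn_def
    by (rule rtrancl_mono) (use that in \<open>auto simp: uncut_edges_def\<close>)
  fix x y assume "x \<in> S \<longleftrightarrow> y \<in> S"
  then obtain T where T: "T = S \<or> T = UNIV - S" and "x \<in> T" "y \<in> T"
    by blast
  then have "connected_on G T"
    using assms by blast
  then have "(x,y) \<in> und_conn (G \<inter> T \<times> T)"
    using \<open>x \<in> T\<close> \<open>y \<in> T\<close> by (intro rtrancl_und_edges_on_subset_und_conn connected_onD)
  then show "(x,y) \<in> und_conn (uncut_edges G S)"
    using mono[OF T] by blast
qed

lemma card_und_components_uncut_edges:
  assumes "connected_on G S" and "connected_on G (UNIV - S)"
  shows "card (und_components (uncut_edges G S)) = 2"
proof -
  have side_class: "und_conn (uncut_edges G S) `` {x} = (if x \<in> S then S else UNIV - S)" for x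
    using und_conn_uncut_edges[OF assms] by auto
  obtain s t where "s \<in> S" "t \<in> UNIV - S"
    using connected_on_nonempty[OF assms(1)] connected_on_nonempty[OF assms(2)] by blast
  then have "und_components (uncut_edges G S) = {S, UNIV - S}"
    unfolding und_components_def quotient_def using side_class by (auto split: if_splits)
  moreover have "S \<noteq> UNIV - S"
    using \<open>s \<in> S\<close> by blast
  ultimately show ?thesis
    by simp
qed

lemma level_edges_indicator_eq_uncut_edges:
  "level_edges G (\<chi> k. if k \<in> S then 0 else 1) = uncut_edges G S"
  unfolding level_edges_def uncut_edges_def by (auto split: if_splits)

lemma facet_of_block_cut:
  fixes G :: "('n::finite) digraph"
  assumes "und_connected G" and "block_cut G UNIV P S"
  shows "is_facet_of (Qt (uncut_edges G S)) (Qt G)"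
proof -
  have S: "connected_on G S" "connected_on G (UNIV - S)" "pred_closed G UNIV S"
    using assms(2) unfolding block_cut_def by auto
  then have "edge_monotone G (\<chi> k. if k \<in> S then 0 else 1)"
    unfolding edge_monotone_def pred_closed_def by (auto split: if_splits)
  then have "Qt (uncut_edges G S) face_of Qt G"
    using Qt_level_edges_face_of level_edges_indicator_eq_uncut_edges by metis
  then show ?thesis
    unfolding is_facet_of_def
    using face_codim_Qt_iff[OF assms(1)] card_und_components_uncut_edges[OF S(1,2)] by simp
qed

lemma connected_on_und_conn_class:
  assumes "H \<subseteq> G"
  shows "connected_on G (und_conn H `` {x})"
proof (rule connected_onI)
  let ?B = "und_conn H `` {x}"
  show "x \<in> ?B"
    unfolding und_conn_def by simp
  have "(x,y) \<in> (und_edges_on G ?B)\<^sup>*" if "(x,y) \<in> (H \<union> H\<inverse>)\<^sup>*" for y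
    using that
  proof (induction rule: rtrancl_induct)
    case (step w v)
    then have "w \<in> ?B" "v \<in> ?B"
      by (simp_all add: und_conn_def rtrancl.rtrancl_into_rtrancl)
    then have "(w,v) \<in> und_edges_on G ?B"
      using step(2) assms unfolding und_edges_on_def by auto
    with step(3) show ?case
      by (rule rtrancl.rtrancl_into_rtrancl)
  qed simp
  then show "(x,y) \<in> (und_edges_on G ?B)\<^sup>*" if "y \<in> ?B" for y
    using that by (simp add: und_conn_def)
qed

section \<open>Faces of higher codimension\<close>

lemma graded_partition_level_edges:
  fixes G :: "('n::finite) digraph"
  assumes "edge_monotone G a"
  shows "graded_partition G (\<lambda>i. a $ i) UNIV (und_components (level_edges G a))"
proof (rule graded_partitionI)
  let ?H = "level_edges G a"
  have same_class: "(x,y) \<in> und_conn ?H" if "B \<in> und_components ?H" "x \<in> B" "y \<in> B" for B x y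
  proof -
    have "und_conn ?H `` {x} = und_conn ?H `` {y}"
      using und_components_mem_iff[OF that(1), of x] und_components_mem_iff[OF that(1), of y] that(2,3)
      by simp
    then show ?thesis
      by (simp add: eq_equiv_class_iff[OF equiv_und_conn])
  qed
  show "\<Union>(und_components ?H) = UNIV"
    unfolding und_components_def using Union_quotient[OF equiv_und_conn] .
  show "connected_on G B" if B: "B \<in> und_components ?H" for B
  proof -
    obtain x where "B = und_conn ?H `` {x}"
      using B unfolding und_components_def by (auto elim: quotientE)
    moreover have "?H \<subseteq> G"
      unfolding level_edges_def by auto
    ultimately show ?thesis
      using connected_on_und_conn_class[of ?H G x] by simp
  qed
  show "B \<inter> B' = {}" if "B \<in> und_components ?H" "B' \<in> und_components ?H" "B \<noteq> B'" for B B'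
    using quotient_disj[OF equiv_und_conn] that unfolding und_components_def by blast
  have "\<forall>(i,j) \<in> ?H. a $ i = a $ j"
    unfolding level_edges_def by auto
  then show "a $ x = a $ y" if "B \<in> und_components ?H" "x \<in> B" "y \<in> B" for B x y
    using edge_constant_und_conn same_class[OF that] by fast
  show "(\<exists>B \<in> und_components ?H. i \<in> B \<and> j \<in> B) \<or> a $ i < a $ j" if "(i,j) \<in> G" for i j
  proof (cases "a $ i = a $ j")
    case True
    then have "(i,j) \<in> ?H"
      using that unfolding level_edges_def by auto
    then have "i \<in> und_conn ?H `` {i}" "j \<in> und_conn ?H `` {i}"
      unfolding und_conn_def by auto
    then show ?thesis
      using und_conn_class_in_und_components[of ?H i] by blast
  next
    case False
    moreover have "a $ i \<le> a $ j"
      using assms that unfolding edge_monotone_def by blast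
    ultimately show ?thesis
      by simp
  qed
qed

lemma connected_on_UNIV:
  assumes "und_connected G"
  shows "connected_on G UNIV"
proof -
  obtain C where C: "und_components G = {C}"
    using assms unfolding und_connected_def by (rule card_1_singletonE)
  have "\<Union>(und_components G) = UNIV"
    unfolding und_components_def by (rule Union_quotient[OF equiv_und_conn])
  with C have "C = UNIV"
    by simp
  have "(x,y) \<in> (G \<union> G\<inverse>)\<^sup>*" for x y
  proof -
    have "und_conn G `` {x} = UNIV"
      using und_conn_class_in_und_components[of G x] C \<open>C = UNIV\<close> by simp
    then show ?thesis
      unfolding und_conn_def by blast
  qed
  moreover have "und_edges_on G UNIV = G \<union> G\<inverse>"
    unfolding und_edges_on_def by auto
  ultimately show ?thesis
    unfolding connected_on_def by simp
qed

lemma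
  fixes G :: "('n::finite) digraph" and b :: "'i \<Rightarrow> real ^ 'n"
  assumes "finite I" and mono: "\<And>i. i \<in> I \<Longrightarrow> edge_monotone G (b i)"
  shows edge_monotone_sum: "edge_monotone G (\<Sum>i \<in> I. b i)"
    and level_edges_sum: "I \<noteq> {} \<Longrightarrow> level_edges G (\<Sum>i \<in> I. b i) = (\<Inter>i \<in> I. level_edges G (b i))"
proof -
  have le: "b i $ k \<le> b i $ l" if "i \<in> I" "(k,l) \<in> G" for i k l
    using mono[OF that(1)] that(2) unfolding edge_monotone_def by auto
  then show "edge_monotone G (\<Sum>i \<in> I. b i)"
    unfolding edge_monotone_def by (auto intro: sum_mono)
  have "(\<Sum>i \<in> I. b i $ k) = (\<Sum>i \<in> I. b i $ l) \<longleftrightarrow> (\<forall>i \<in> I. b i $ k = b i $ l)"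
    if "(k,l) \<in> G" for k l
  proof
    assume eq: "(\<Sum>i \<in> I. b i $ k) = (\<Sum>i \<in> I. b i $ l)"
    show "\<forall>i \<in> I. b i $ k = b i $ l"
    proof (rule ccontr)
      assume "\<not> ?thesis"
      have "\<forall>i \<in> I. b i $ k \<le> b i $ l"
        using le[OF _ that] by blast
      moreover from this \<open>\<not> ?thesis\<close> have "\<exists>i \<in> I. b i $ k < b i $ l"
        by (auto simp: order.strict_iff_order)
      ultimately have "(\<Sum>i \<in> I. b i $ k) < (\<Sum>i \<in> I. b i $ l)"
        by (rule sum_strict_mono_ex1[OF \<open>finite I\<close>])
      with eq show False
        by simp
    qed
  qed (simp cong: sum.cong)
  then show "I \<noteq> {} \<Longrightarrow> level_edges G (\<Sum>i \<in> I. b i) = (\<Inter>i \<in> I. level_edges G (b i))"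
    unfolding level_edges_def by auto
qed

lemma face_of_Qt_imp_Inter_facets:
  fixes G H :: "('n::finite) digraph"
  assumes "irrefl G" "und_connected G" "H \<subseteq> G" "Qt H face_of Qt G"
  obtains Ss where "length Ss + 1 = card (und_components H)"
    "\<forall>S \<in> set Ss. is_facet_of (Qt (uncut_edges G S)) (Qt G)"
    "H = G \<inter> (\<Inter>S \<in> set Ss. uncut_edges G S)"
proof -
  obtain a where mono: "edge_monotone G a" and H: "H = level_edges G a"
    using face_of_Qt_imp_level_edges[OF assms(1,3,4)] .
  let ?P = "und_components H"
  have p: "graded_partition G (\<lambda>i. a $ i) UNIV ?P"
    using graded_partition_level_edges[OF mono] H by simp
  obtain Ss where len: "length Ss + 1 = card ?P" and cuts: "\<forall>S \<in> set Ss. block_cut G UNIV ?P S"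
    and sep: "cuts_separate_blocks G UNIV ?P (set Ss)"
    using exists_block_cuts[OF p connected_on_UNIV[OF assms(2)]] by blast
  have "H = G \<inter> (\<Inter>S \<in> set Ss. uncut_edges G S)"
  proof (intro equalityI subsetI)
    fix e assume "e \<in> H"
    then obtain k l where e: "e = (k,l)" "(k,l) \<in> H"
      by (cases e) auto
    let ?B = "und_conn H `` {k}"
    have "k \<in> ?B" "l \<in> ?B"
      using e(2) unfolding und_conn_def by auto
    have "k \<in> S \<longleftrightarrow> l \<in> S" if "S \<in> set Ss" for S
      using block_cut_block[OF bspec[OF cuts that] und_conn_class_in_und_components[of H k]]
        \<open>k \<in> ?B\<close> \<open>l \<in> ?B\<close> by blast
    then show "e \<in> G \<inter> (\<Inter>S \<in> set Ss. uncut_edges G S)"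
      using e assms(3) unfolding uncut_edges_def by auto
  next
    fix e assume e: "e \<in> G \<inter> (\<Inter>S \<in> set Ss. uncut_edges G S)"
    then obtain k l where kl: "e = (k,l)" "(k,l) \<in> G" and same: "\<forall>S \<in> set Ss. k \<in> S \<longleftrightarrow> l \<in> S"
      unfolding uncut_edges_def by (cases e) auto
    have "\<exists>B \<in> ?P. k \<in> B \<and> l \<in> B"
      by (rule cuts_separate_blocksD[OF sep kl(2)]) (use same in auto)
    then obtain B where "B \<in> ?P" "k \<in> B" "l \<in> B"
      by blast
    then have "a $ k = a $ l"
      by (rule graded_partition_const[OF p])
    then show "e \<in> H"
      using H kl unfolding level_edges_def by simp
  qed
  moreover have "\<forall>S \<in> set Ss. is_facet_of (Qt (uncut_edges G S)) (Qt G)"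
    using cuts facet_of_block_cut[OF assms(2), of ?P] by blast
  ultimately show ?thesis
    using that len by blast
qed

lemma Inter_faces_of_Qt:
  fixes G :: "('n::finite) digraph" and Hs :: "'i \<Rightarrow> 'n digraph"
  assumes "irrefl G" "finite I" "I \<noteq> {}"
    and "\<And>i. i \<in> I \<Longrightarrow> Hs i \<subseteq> G" "\<And>i. i \<in> I \<Longrightarrow> Qt (Hs i) face_of Qt G"
  shows "Qt (\<Inter>i \<in> I. Hs i) face_of Qt G"
proof -
  have "\<exists>b. edge_monotone G b \<and> Hs i = level_edges G b" if "i \<in> I" for i
    using face_of_Qt_iff[OF assms(1) assms(4)[OF that]] assms(5)[OF that] by blast
  then obtain b where b: "\<And>i. i \<in> I \<Longrightarrow> edge_monotone G (b i) \<and> Hs i = level_edges G (b i)"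
    by metis
  then have mono: "\<And>i. i \<in> I \<Longrightarrow> edge_monotone G (b i)"
    by blast
  have "(\<Inter>i \<in> I. Hs i) = (\<Inter>i \<in> I. level_edges G (b i))"
    using b by simp
  also have "\<dots> = level_edges G (\<Sum>i \<in> I. b i)"
    by (rule level_edges_sum[OF assms(2) mono assms(3), symmetric])
  finally show ?thesis
    using Qt_level_edges_face_of[OF edge_monotone_sum[OF assms(2) mono]] by simp
qed

lemma face_of_Qt_imp_facet_family:
  fixes G H :: "('n::finite) digraph"
  assumes G: "irrefl G" and "und_connected G" and H: "H \<subseteq> G" and face: "Qt H face_of Qt G"
    and card: "card (und_components H) = d + 1" and "d \<ge> 1"
  shows "\<exists>Hs :: nat \<Rightarrow> 'n digraph.
    (\<forall>i \<in> {1..d}. subgraph (Hs i) G \<and> is_facet_of (Qt (Hs i)) (Qt G)) \<and> H = (\<Inter>i \<in> {1..d}. Hs i)"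
proof -
  obtain Ss where len: "length Ss + 1 = card (und_components H)"
    and facets: "\<forall>S \<in> set Ss. is_facet_of (Qt (uncut_edges G S)) (Qt G)"
    and H_Inter: "H = G \<inter> (\<Inter>S \<in> set Ss. uncut_edges G S)"
    using face_of_Qt_imp_Inter_facets[OF G assms(2) H face] .
  have "length Ss = d"
    using len card by simp
  define Hs where "Hs i = uncut_edges G (Ss ! (i - 1))" for i
  have "(\<lambda>i. Ss ! (i - 1)) ` {1..d} = (\<lambda>i. Ss ! i) ` {..<d}"
    unfolding image_Suc_lessThan[symmetric] image_image by simp
  also have "\<dots> = set Ss"
    using \<open>length Ss = d\<close> by (auto simp: set_conv_nth)
  finally have idx: "(\<lambda>i. Ss ! (i - 1)) ` {1..d} = set Ss" .
  have Hs_image: "Hs ` {1..d} = uncut_edges G ` set Ss"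
    unfolding idx[symmetric] image_image Hs_def by simp
  obtain S0 where "S0 \<in> set Ss"
    using \<open>length Ss = d\<close> \<open>d \<ge> 1\<close> by (cases Ss) auto
  then have "H = (\<Inter>S \<in> set Ss. uncut_edges G S)"
    using H_Inter by (auto simp: uncut_edges_def)
  also have "\<dots> = (\<Inter>i \<in> {1..d}. Hs i)"
    unfolding Hs_image ..
  finally have "H = (\<Inter>i \<in> {1..d}. Hs i)" .
  moreover have "subgraph (Hs i) G \<and> is_facet_of (Qt (Hs i)) (Qt G)" if "i \<in> {1..d}" for i
  proof -
    have "Ss ! (i - 1) \<in> set Ss"
      using that \<open>length Ss = d\<close> by (intro nth_mem) auto
    then show ?thesis
      using facets uncut_edges_subset[of G "Ss ! (i - 1)"] unfolding Hs_def subgraph_def by blast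
  qed
  ultimately show ?thesis
    by (intro exI[of _ Hs]) blast
qed

theorem mainTheorem14:
  fixes G H :: "('n::{finite,linorder}) digraph" and d :: nat
  assumes "is_dag_ord G" and "alternating G" and "und_connected G"
    and "d \<ge> 1" and "subgraph H G"
  shows "face_codim (Qt H) (Qt G) d \<longleftrightarrow>
    (card (und_components H) = d + 1 \<and>
     (\<exists>Hs :: nat \<Rightarrow> 'n digraph.
        (\<forall>i\<in>{1..d}. subgraph (Hs i) G \<and> is_facet_of (Qt (Hs i)) (Qt G)) \<and>
        H = (\<Inter>i\<in>{1..d}. Hs i)))"
proof -
  have G: "irrefl G"
    using assms(1) unfolding is_dag_ord_def irrefl_def by auto
  have H: "H \<subseteq> G"
    using assms(5) unfolding subgraph_def .
  have facets_face: "Qt (\<Inter>i \<in> {1..d}. Hs i) face_of Qt G"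
    if "\<forall>i \<in> {1..d}. subgraph (Hs i) G \<and> is_facet_of (Qt (Hs i)) (Qt G)" for Hs :: "nat \<Rightarrow> 'n digraph"
    by (rule Inter_faces_of_Qt[OF G])
      (use that \<open>d \<ge> 1\<close> in \<open>auto simp: subgraph_def is_facet_of_def face_codim_def\<close>)
  show ?thesis
    unfolding face_codim_Qt_iff[OF assms(3)]
  proof
    assume "Qt H face_of Qt G \<and> card (und_components H) = d + 1"
    then show "card (und_components H) = d + 1 \<and> (\<exists>Hs. (\<forall>i \<in> {1..d}. subgraph (Hs i) G
        \<and> is_facet_of (Qt (Hs i)) (Qt G)) \<and> H = (\<Inter>i \<in> {1..d}. Hs i))"
      using face_of_Qt_imp_facet_family[OF G assms(3) H _ _ assms(4)] by blast
  next
    assume "card (und_components H) = d + 1 \<and> (\<exists>Hs. (\<forall>i \<in> {1..d}. subgraph (Hs i) G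
        \<and> is_facet_of (Qt (Hs i)) (Qt G)) \<and> H = (\<Inter>i \<in> {1..d}. Hs i))"
    then obtain Hs where "\<forall>i \<in> {1..d}. subgraph (Hs i) G \<and> is_facet_of (Qt (Hs i)) (Qt G)"
      and "H = (\<Inter>i \<in> {1..d}. Hs i)" and "card (und_components H) = d + 1"
      by blast
    then show "Qt H face_of Qt G \<and> card (und_components H) = d + 1"
      using facets_face by simp
  qed
qed

end
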